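(* Assume Dickson's conjecture. Then there are infinitely many positive integers $n$ such that $$r(n,n)\ge \frac{9}{8}-\frac{9}{8n}.$$
   Context: $\phi$ denotes Euler's totient function. For positive integers $a,b$, $c(a,b)$ is the least positive integer $c$ such that $\phi(a!)\,\phi(b!)$ divides $\phi(c!)$, and $r(a,b)=c(a,b)/(a+b)$. Dickson's conjecture: Let $a_1,\dots,a_k$ be integers and $b_1,\dots,b_k$ positive integers. If there is no prime $q$ such that $q$ divides $\prod_{i=1}^k(a_i+b_in)$ for every $n\in\{0,1,\dots,q-1\}$, then there are infinitely many positive integers $n$ for which $a_1+b_1n,\dots,a_k+b_kn$ are all prime. *)

theory Defs
  imports Complex_Main "HOL-Number_Theory.Number_Theory"
begin

definition c_fun :: "nat \<Rightarrow> nat \<Rightarrow> nat" where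
  "c_fun a b = (LEAST c. c > 0 \<and> totient (fact a) * totient (fact b) dvd totient (fact c))"

definition r_fun :: "nat \<Rightarrow> nat \<Rightarrow> real" where
  "r_fun a b = real (c_fun a b) / real (a + b)"

definition dickson_conjecture :: bool where
  "dickson_conjecture \<longleftrightarrow>
     (\<forall>(k::nat) (a::nat \<Rightarrow> int) (b::nat \<Rightarrow> int).
        (\<forall>i<k. b i > 0) \<longrightarrow>
        \<not> (\<exists>q::nat. prime q \<and> (\<forall>n<q. int q dvd (\<Prod>i<k. a i + b i * int n))) \<longrightarrow>
        infinite {n::nat. n > 0 \<and> (\<forall>i<k. prime (a i + b i * int n))})"

end

theory Submission
  imports Defs
begin

text \<open>
  Take a prime \<open>p \<equiv> 11 (mod 210)\<close> such that \<open>2p+1\<close>, \<open>6p+1\<close> and \<open>8p+1\<close> are prime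
  (Dickson's conjecture supplies infinitely many), and put \<open>n = 8p+1\<close>. Writing
  \<open>v\<^sub>p(\<phi>(c!)) = (v\<^sub>p(c!) - 1) + \<Sum>\<^bsub>q \<le> c prime\<^esub> v\<^sub>p(q - 1)\<close>, one gets
  \<open>v\<^sub>p(\<phi>(n!)) \<ge> 7 + 3\<close>. For \<open>c < 18p < p\<^sup>2\<close> we have \<open>v\<^sub>p(c!) \<le> 17\<close>, and the only
  primes \<open>q = jp + 1\<close> with \<open>j < 18\<close> are the three above, since the congruence of \<open>p\<close> modulo
  210 makes every other such \<open>q\<close> divisible by 2, 3, 5 or 7; hence \<open>v\<^sub>p(\<phi>(c!)) \<le> 19 < 20\<close>.
  So \<open>c(n,n) \<ge> 18p = 9(n-1)/4\<close>, i.e. \<open>r(n,n) \<ge> 9/8 - 9/(8n)\<close>.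
\<close>

lemma multiplicity_fact_below_square:
  fixes p :: nat
  assumes "prime p" "n < p\<^sup>2"
  shows "multiplicity p (fact n :: nat) = n div p"
  using assms(2)
proof (induction n)
  case 0
  then show ?case by simp
next
  case (Suc n)
  have "multiplicity p (Suc n) = (if p dvd Suc n then 1 else 0)"
  proof (cases "p dvd Suc n")
    case True
    then obtain j where j: "Suc n = p * j" ..
    with Suc.prems have "0 < j" "j < p"
      by (auto simp: power2_eq_square intro!: Nat.gr0I)
    then have "\<not> p dvd j"
      using nat_dvd_not_less by blast
    moreover have "multiplicity p (p * j) = Suc (multiplicity p j)"
      using \<open>0 < j\<close> assms(1) by (intro multiplicity_times_same) auto
    ultimately show ?thesis
      using True j by (simp add: not_dvd_imp_multiplicity_0)
  qed (simp add: not_dvd_imp_multiplicity_0)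
  moreover have "multiplicity p (fact (Suc n) :: nat) = multiplicity p (Suc n) + multiplicity p (fact n :: nat)"
    using assms(1) prime_elem_multiplicity_mult_distrib[of p "Suc n" "fact n"] by simp
  ultimately show ?case
    using Suc by (simp add: div_Suc dvd_eq_mod_eq_0)
qed

lemma multiplicity_le_one_below_square:
  fixes p x :: nat
  assumes "1 < p" "0 < x" "x < p\<^sup>2"
  shows "multiplicity p x \<le> 1"
proof (rule ccontr)
  assume "\<not> multiplicity p x \<le> 1"
  then have "p\<^sup>2 dvd x"
    by (intro multiplicity_dvd') simp
  with assms show False
    by (auto dest: dvd_imp_le)
qed

lemma multiplicity_totient:
  fixes p n :: nat
  assumes "prime p" "0 < n"
  shows "multiplicity p (totient n) =
    (\<Sum>q\<in>prime_factors n. (if q = p then multiplicity p n - 1 else 0) + multiplicity p (q - 1))"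
proof -
  have "multiplicity p (totient n) = multiplicity p (\<Prod>q\<in>prime_factors n. q ^ (multiplicity q n - 1) * (q - 1))"
    using totient_formula1[OF assms(2)] by simp
  also have "\<dots> = (\<Sum>q\<in>prime_factors n. multiplicity p (q ^ (multiplicity q n - 1) * (q - 1)))"
    using assms by (intro prime_elem_multiplicity_prod_distrib) (auto simp: in_prime_factors_iff dest!: prime_gt_1_nat)
  also have "\<dots> = (\<Sum>q\<in>prime_factors n. (if q = p then multiplicity p n - 1 else 0) + multiplicity p (q - 1))"
  proof (rule sum.cong[OF refl])
    fix q assume "q \<in> prime_factors n"
    then have q: "prime q" "1 < q"
      by (auto simp: in_prime_factors_iff prime_gt_Suc_0_nat)
    have "multiplicity p q = (if q = p then 1 else 0)"
      using assms(1) q(1) by (auto simp: prime_multiplicity_other)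
    with assms(1) q(2) show "multiplicity p (q ^ (multiplicity q n - 1) * (q - 1)) =
        (if q = p then multiplicity p n - 1 else 0) + multiplicity p (q - 1)"
      by (simp add: prime_elem_multiplicity_mult_distrib prime_elem_multiplicity_power_distrib)
  qed
  finally show ?thesis .
qed

lemma multiplicity_totient_fact:
  fixes p n :: nat
  assumes "prime p"
  shows "multiplicity p (totient (fact n)) =
    (multiplicity p (fact n :: nat) - 1) + (\<Sum>q | prime q \<and> q \<le> n. multiplicity p (q - 1))"
proof -
  have factors: "prime_factors (fact n :: nat) = {q. prime q \<and> q \<le> n}"
    by (auto simp: prime_factors_fact prime_ge_2_nat)
  have "(\<Sum>q | prime q \<and> q \<le> n. if q = p then multiplicity p (fact n :: nat) - 1 else 0)
      = multiplicity p (fact n :: nat) - 1"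
    using assms by (auto simp: prime_dvd_fact_iff not_dvd_imp_multiplicity_0)
  then show ?thesis
    using multiplicity_totient[OF assms, of "fact n"] by (simp add: factors sum.distrib)
qed

lemma c_fun_pos_dvd:
  "0 < c_fun a b \<and> totient (fact a) * totient (fact b) dvd totient (fact (c_fun a b) :: nat)"
proof -
  define N where "N = totient (fact a :: nat) * totient (fact b)"
  have "0 < N"
    by (simp add: N_def)
  have "N dvd totient (N\<^sup>2)"
    by (simp add: totient_power)
  also have "totient (N\<^sup>2) dvd totient (fact (N\<^sup>2))"
    using \<open>0 < N\<close> by (intro totient_dvd dvd_fact) auto
  finally have "0 < N\<^sup>2 \<and> N dvd totient (fact (N\<^sup>2))"
    using \<open>0 < N\<close> by simp
  then show ?thesis
    unfolding c_fun_def N_def by (rule LeastI)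
qed

lemma c_fun_lower_bound:
  fixes p :: nat
  assumes "prime p"
    and "\<And>c. 0 < c \<Longrightarrow> c < C \<Longrightarrow> multiplicity p (totient (fact c)) <
           multiplicity p (totient (fact a)) + multiplicity p (totient (fact b))"
  shows "C \<le> c_fun a b"
proof (rule ccontr)
  assume "\<not> C \<le> c_fun a b"
  moreover have "multiplicity p (totient (fact a) * totient (fact b))
      \<le> multiplicity p (totient (fact (c_fun a b)) :: nat)"
    using c_fun_pos_dvd by (intro dvd_imp_multiplicity_le) auto
  moreover have "multiplicity p (totient (fact a) * totient (fact b) :: nat)
      = multiplicity p (totient (fact a) :: nat) + multiplicity p (totient (fact b) :: nat)"
    using assms(1) by (intro prime_elem_multiplicity_mult_distrib) auto
  ultimately show False
    using assms(2)[of "c_fun a b"] c_fun_pos_dvd[of a b] by linarith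
qed

lemma prime_mult_plus_one_cases:
  fixes p j :: nat
  assumes "p mod 210 = 11" "prime (j * p + 1)" "0 < j" "j < 18"
  shows "j \<in> {2, 6, 8}"
proof -
  have "[j * p + 1 = j * 11 + 1] (mod 210)"
    using assms(1) by (intro cong_add cong_mult) (auto simp: cong_def)
  then have same_divisors: "d dvd j * p + 1 \<longleftrightarrow> d dvd j * 11 + 1" if "d dvd 210" for d
    using that by (meson cong_dvd_iff cong_dvd_modulus_nat)
  have "11 \<le> p"
    using assms(1) mod_less_eq_dividend[of p 210] by simp
  also have "p \<le> j * p"
    using assms(3) by simp
  finally have large: "7 < j * p + 1" by simp
  have no_small_divisor: "\<not> d dvd j * 11 + 1" if "d \<in> {2, 3, 5, 7}" for d
  proof -
    from that large have "d dvd 210" "1 < d" "d < j * p + 1"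
      by auto
    then show ?thesis
      using prime_nat_not_dvd[OF assms(2)] same_divisors[of d] by simp
  qed
  moreover have "\<forall>j\<in>{1..<18::nat}. (\<forall>d\<in>{2, 3, 5, 7}. \<not> d dvd j * 11 + 1) \<longrightarrow> j \<in> {2, 6, 8}"
    by (simp add: atLeastLessThan_nat_numeral)
  moreover have "j \<in> {1..<18}"
    using assms(3,4) by simp
  ultimately show ?thesis
    by blast
qed

lemma multiplicity_totient_fact_upper:
  fixes p c :: nat
  assumes "prime p" "18 < p" "p mod 210 = 11" "c < 18 * p"
  shows "multiplicity p (totient (fact c)) \<le> 19"
proof -
  define T where "T = {2 * p + 1, 6 * p + 1, 8 * p + 1}"
  have "18 * p \<le> p\<^sup>2"
    using assms(2) mult_le_mono1[of 18 p p] by (simp add: power2_eq_square)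
  with assms(4) have below_square: "c < p\<^sup>2"
    by linarith
  have "multiplicity p (fact c :: nat) = c div p"
    using multiplicity_fact_below_square[OF assms(1) below_square] .
  moreover have "c div p < 18"
    using assms(4) by (simp add: div_less_iff_less_mult)
  ultimately have fact_part: "multiplicity p (fact c :: nat) - 1 \<le> 16"
    by simp
  have prime_part: "multiplicity p (q - 1) \<le> (if q \<in> T then 1 else 0)"
    if q: "prime q" "q \<le> c" for q
  proof (cases "p dvd q - 1")
    case True
    then obtain j where j: "q - 1 = j * p"
      by (metis dvdE mult.commute)
    have "2 \<le> q"
      using q(1) by (rule prime_ge_2_nat)
    then have "0 < j" "q = j * p + 1"
      using j by (auto intro!: Nat.gr0I)
    moreover have "j * p < 18 * p"
      using \<open>q = j * p + 1\<close> q(2) assms(4) by linarith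
    then have "j < 18"
      by simp
    ultimately have "q \<in> T"
      using prime_mult_plus_one_cases[OF assms(3)] q(1) unfolding T_def by auto
    moreover have "multiplicity p (q - 1) \<le> 1"
      using assms(1) \<open>2 \<le> q\<close> q(2) below_square
      by (intro multiplicity_le_one_below_square) (auto simp: prime_gt_Suc_0_nat)
    ultimately show ?thesis
      by simp
  qed (simp add: not_dvd_imp_multiplicity_0)
  have "(\<Sum>q | prime q \<and> q \<le> c. multiplicity p (q - 1))
      \<le> (\<Sum>q | prime q \<and> q \<le> c. if q \<in> T then 1 else 0)"
    using prime_part by (intro sum_mono) auto
  also have "\<dots> = card ({q. prime q \<and> q \<le> c} \<inter> T)"
    by (simp add: sum.If_cases)
  also have "\<dots> \<le> card T"
    by (intro card_mono) (auto simp: T_def)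
  also have "\<dots> \<le> 3"
    by (auto simp: T_def card_insert_if)
  finally show ?thesis
    using fact_part multiplicity_totient_fact[OF assms(1), of c] by linarith
qed

lemma multiplicity_totient_fact_lower:
  fixes p :: nat
  assumes "prime p" "8 < p" "prime (2 * p + 1)" "prime (6 * p + 1)" "prime (8 * p + 1)"
  shows "10 \<le> multiplicity p (totient (fact (8 * p + 1)))"
proof -
  define T where "T = {2 * p + 1, 6 * p + 1, 8 * p + 1}"
  have "(8 * p + 1) div p = 8"
    using assms(2) by (intro div_nat_eqI) auto
  moreover have "9 * p \<le> p\<^sup>2"
    using assms(2) mult_le_mono1[of 9 p p] by (simp add: power2_eq_square)
  then have "8 * p + 1 < p\<^sup>2"
    using assms(2) by linarith
  ultimately have fact_part: "multiplicity p (fact (8 * p + 1) :: nat) = 8"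
    using multiplicity_fact_below_square[OF assms(1)] by metis
  have "3 = card T"
    using assms(2) by (simp add: T_def)
  also have "\<dots> \<le> (\<Sum>q\<in>T. multiplicity p (q - 1))"
  proof -
    have multiple: "0 < multiplicity p (k * p)" if "0 < k" for k
      using that prime_gt_1_nat[OF assms(1)] multiplicity_eq_zero_iff[where p = p and x = "k * p"]
      by simp
    have "1 \<le> multiplicity p (q - 1)" if "q \<in> T" for q
      using that multiple[of 2] multiple[of 6] multiple[of 8] by (auto simp: T_def)
    then show ?thesis
      using sum_bounded_below[of T 1 "\<lambda>q. multiplicity p (q - 1)"] by simp
  qed
  also have "\<dots> \<le> (\<Sum>q | prime q \<and> q \<le> 8 * p + 1. multiplicity p (q - 1))"
    using assms(3-5) by (intro sum_mono2) (auto simp: T_def)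
  finally show ?thesis
    using fact_part multiplicity_totient_fact[OF assms(1), of "8 * p + 1"] by linarith
qed

lemma c_fun_ge:
  fixes p :: nat
  assumes "prime p" "18 < p" "p mod 210 = 11"
    and "prime (2 * p + 1)" "prime (6 * p + 1)" "prime (8 * p + 1)"
  shows "18 * p \<le> c_fun (8 * p + 1) (8 * p + 1)"
proof (rule c_fun_lower_bound[OF assms(1)])
  fix c :: nat
  assume "c < 18 * p"
  with assms(1-3) have "multiplicity p (totient (fact c)) \<le> 19"
    by (rule multiplicity_totient_fact_upper)
  moreover have "10 \<le> multiplicity p (totient (fact (8 * p + 1)))"
    using assms by (intro multiplicity_totient_fact_lower) auto
  ultimately show "multiplicity p (totient (fact c)) <
      multiplicity p (totient (fact (8 * p + 1))) + multiplicity p (totient (fact (8 * p + 1)))"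
    by linarith
qed

lemma no_prime_divides_quadruple_values:
  "\<not> (\<exists>q::nat. prime q \<and> (\<forall>n<q. int q dvd
      (11 + 210 * int n) * (23 + 420 * int n) * (67 + 1260 * int n) * (89 + 1680 * int n)))"
proof
  assume "\<exists>q::nat. prime q \<and> (\<forall>n<q. int q dvd
      (11 + 210 * int n) * (23 + 420 * int n) * (67 + 1260 * int n) * (89 + 1680 * int n))"
  then obtain q :: nat where q: "prime q" "\<forall>n<q. int q dvd
      (11 + 210 * int n) * (23 + 420 * int n) * (67 + 1260 * int n) * (89 + 1680 * int n)"
    by blast
  have "1 < q"
    using q(1) by (rule prime_gt_1_nat)
  then have "int q dvd 1508639" "int q dvd 229823670089"
    using q(2) by auto
  \<comment> \<open>the values at \<open>n = 0, 1\<close> are coprime: this Bezout combination equals 1\<close>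
  then have "int q dvd (-98468045968) * 1508639 + 646377 * 229823670089"
    by (intro dvd_add dvd_mult) auto
  with \<open>1 < q\<close> show False
    by simp
qed

lemma infinite_prime_quadruples:
  assumes "dickson_conjecture"
  shows "infinite {p::nat. prime p \<and> 18 < p \<and> p mod 210 = 11 \<and>
    prime (2 * p + 1) \<and> prime (6 * p + 1) \<and> prime (8 * p + 1)}"
proof -
  define a :: "nat \<Rightarrow> int" where "a = (\<lambda>i. [11, 23, 67, 89] ! i)"
  define b :: "nat \<Rightarrow> int" where "b = (\<lambda>i. [210, 420, 1260, 1680] ! i)"
  have "(\<Prod>i<4. a i + b i * int n) =
      (11 + 210 * int n) * (23 + 420 * int n) * (67 + 1260 * int n) * (89 + 1680 * int n)" for n
    by (simp add: a_def b_def numeral_eq_Suc lessThan_Suc)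
  then have "infinite {m::nat. 0 < m \<and> (\<forall>i<4. prime (a i + b i * int m))}"
    using assms no_prime_divides_quadruple_values unfolding dickson_conjecture_def
    by (auto simp: b_def nth_Cons')
  moreover have "inj (\<lambda>m::nat. 11 + 210 * m)"
    by (auto intro: injI)
  ultimately have "infinite ((\<lambda>m. 11 + 210 * m) ` {m::nat. 0 < m \<and> (\<forall>i<4. prime (a i + b i * int m))})"
    by (auto dest: finite_imageD inj_on_subset)
  moreover have "(\<lambda>m. 11 + 210 * m) ` {m::nat. 0 < m \<and> (\<forall>i<4. prime (a i + b i * int m))} \<subseteq>
      {p. prime p \<and> 18 < p \<and> p mod 210 = 11 \<and> prime (2 * p + 1) \<and> prime (6 * p + 1) \<and> prime (8 * p + 1)}"
  proof clarify
    fix m :: nat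
    assume "0 < m" and primes: "\<forall>i<4. prime (a i + b i * int m)"
    have "prime (int (11 + 210 * m))" "prime (int (2 * (11 + 210 * m) + 1))"
      "prime (int (6 * (11 + 210 * m) + 1))" "prime (int (8 * (11 + 210 * m) + 1))"
      using primes[rule_format, of 0] primes[rule_format, of 1] primes[rule_format, of 2] primes[rule_format, of 3]
      by (simp_all add: a_def b_def)
    with \<open>0 < m\<close> show "prime (11 + 210 * m) \<and> 18 < 11 + 210 * m \<and> (11 + 210 * m) mod 210 = 11 \<and>
        prime (2 * (11 + 210 * m) + 1) \<and> prime (6 * (11 + 210 * m) + 1) \<and> prime (8 * (11 + 210 * m) + 1)"
      by (simp only: prime_nat_int_transfer) simp
  qed
  ultimately show ?thesis
    by (rule infinite_super[rotated])
qed

lemma r_fun_ge: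
  fixes p :: nat
  assumes "prime p" "18 < p" "p mod 210 = 11"
    and "prime (2 * p + 1)" "prime (6 * p + 1)" "prime (8 * p + 1)"
  shows "9/8 - 9 / (8 * real (8 * p + 1)) \<le> r_fun (8 * p + 1) (8 * p + 1)"
proof -
  have "9/8 - 9 / (8 * real (8 * p + 1)) = real (18 * p) / real ((8 * p + 1) + (8 * p + 1))"
    by (simp add: field_simps)
  also have "\<dots> \<le> r_fun (8 * p + 1) (8 * p + 1)"
    unfolding r_fun_def using c_fun_ge[OF assms] by (intro divide_right_mono) auto
  finally show ?thesis .
qed

theorem theorem1p4:
  assumes "dickson_conjecture"
  shows "infinite {n::nat. n > 0 \<and> r_fun n n \<ge> 9/8 - 9 / (8 * real n)}"
proof -
  let ?P = "{p::nat. prime p \<and> 18 < p \<and> p mod 210 = 11 \<and>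
    prime (2 * p + 1) \<and> prime (6 * p + 1) \<and> prime (8 * p + 1)}"
  have "infinite ((\<lambda>p. 8 * p + 1) ` ?P)"
    using infinite_prime_quadruples[OF assms] by (auto dest: finite_imageD simp: inj_on_def)
  moreover have "(\<lambda>p. 8 * p + 1) ` ?P \<subseteq> {n. n > 0 \<and> r_fun n n \<ge> 9/8 - 9 / (8 * real n)}"
    using r_fun_ge by auto
  ultimately show ?thesis
    by (rule infinite_super[rotated])
qed

end
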